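(* In the setting of the context, let $f(x)=\sum_{i=1}^mf_i(x)$. If $\frac12(\underline C+\underline C^\top)$ is positive semidefinite, then $f$ is convex on $\mathbb{R}^m$.
   Context: There are $m$ players with decisions $x_i\in\mathbb{R}$, $x=(x_1,\dots,x_m)\in\mathbb{R}^m$. Data: $a_i\ge0$, $b_i\in\mathbb{R}$, $c_{ij}\in\mathbb{R}$ ($i\ne j$), $c_i^{\mathrm{up}}>0$, $X_i=[0,c_i^{\mathrm{up}}]$, $\eta>0$; $\mathrm{dist}(x_i,X_i)$ is the distance from $x_i$ to $X_i$. $f_i(x)=\frac12a_ix_i^2+b_ix_i+\big(\sum_{j\ne i}c_{ij}x_j\big)x_i+\frac1{2\eta}\mathrm{dist}^2(x_i,X_i)$. $\underline C\in\mathbb{R}^{m\times m}$ has $\underline C_{ii}=\frac12a_i$ and $\underline C_{ij}=c_{ij}$ for $i\ne j$. *)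

theory Defs
  imports "HOL-Analysis.Analysis"
begin

definition player_cost ::
  "('m::finite \<Rightarrow> real) \<Rightarrow> ('m \<Rightarrow> real) \<Rightarrow> ('m \<Rightarrow> 'm \<Rightarrow> real) \<Rightarrow> ('m \<Rightarrow> real) \<Rightarrow> real
   \<Rightarrow> 'm \<Rightarrow> real^'m \<Rightarrow> real" where
  "player_cost a b c cup \<eta> i x =
     1/2 * a i * (x$i)^2 + b i * x$i + (\<Sum>j\<in>UNIV - {i}. c i j * x$j) * x$i
     + 1/(2*\<eta>) * (infdist (x$i) {0..cup i})^2"

definition Cmat :: "('m::finite \<Rightarrow> real) \<Rightarrow> ('m \<Rightarrow> 'm \<Rightarrow> real) \<Rightarrow> real^'m^'m" where
  "Cmat a c = (\<chi> i j. if i = j then a i / 2 else c i j)"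

definition pos_semidef :: "real^'n^'n \<Rightarrow> bool" where
  "pos_semidef A \<longleftrightarrow> (\<forall>v. 0 \<le> v \<bullet> (A *v v))"

end

theory Submission
  imports Defs
begin

text \<open>
  Summing the players' costs separates the coupling terms from the rest:
  \<open>\<Sum>\<^sub>i f\<^sub>i(x) = x\<^sup>T C x + b\<^sup>T x + (1/2\<eta>) \<Sum>\<^sub>i dist(x\<^sub>i, X\<^sub>i)\<^sup>2\<close>.
  The quadratic form of \<open>C\<close> coincides with that of its symmetric part, which is positive
  semidefinite, so it is convex; the linear term is convex; and each \<open>dist(-, X\<^sub>i)\<^sup>2\<close>
  is convex because the distance to a convex set is a nonnegative convex function and squaring
  is convex and monotone on \<open>[0, \<infinity>)\<close>.
\<close>

lemma convex_on_linear:
  fixes f :: "'a::real_vector \<Rightarrow> real"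
  assumes "linear f" "convex S"
  shows "convex_on S f"
proof (rule convex_onI)
  fix t x y
  show "f ((1 - t) *\<^sub>R x + t *\<^sub>R y) \<le> (1 - t) * f x + t * f y"
    using assms(1) by (simp add: linear_add linear_scale)
qed (fact assms(2))

lemma convex_on_sum_fun:
  assumes "finite I" "\<And>i. i \<in> I \<Longrightarrow> convex_on S (f i)" "convex S"
  shows "convex_on S (\<lambda>x. \<Sum>i\<in>I. f i x)"
  using assms by (induction I rule: finite_induct) (auto simp: convex_on_const)

lemma convex_on_compose_linear:
  fixes h :: "'a::real_vector \<Rightarrow> 'b::real_vector"
  assumes "linear h" "convex_on UNIV g"
  shows "convex_on UNIV (g \<circ> h)"
proof (rule convex_onI)
  fix t :: real and x y assume "0 < t" "t < 1"
  then show "(g \<circ> h) ((1 - t) *\<^sub>R x + t *\<^sub>R y) \<le> (1 - t) * (g \<circ> h) x + t * (g \<circ> h) y"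
    using convex_onD[OF assms(2), of t "h x" "h y"] assms(1)
    by (simp add: linear_add linear_scale)
qed simp

lemma convex_on_compose_mono:
  assumes f: "convex_on S f" and g: "convex_on T g" "mono_on T g" and "f ` S \<subseteq> T"
  shows "convex_on S (g \<circ> f)"
proof (rule convex_onI)
  fix t :: real and x y assume t: "0 < t" "t < 1" and xy: "x \<in> S" "y \<in> S"
  have fxy: "f x \<in> T" "f y \<in> T"
    using xy \<open>f ` S \<subseteq> T\<close> by auto
  have "(1 - t) *\<^sub>R x + t *\<^sub>R y \<in> S"
    using convexD[OF convex_on_imp_convex[OF f] xy, of "1 - t" t] t by simp
  moreover have "(1 - t) * f x + t * f y \<in> T"
    using convexD[OF convex_on_imp_convex[OF g(1)] fxy, of "1 - t" t] t by simp
  ultimately have "g (f ((1 - t) *\<^sub>R x + t *\<^sub>R y)) \<le> g ((1 - t) * f x + t * f y)"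
    using convex_onD[OF f, of t x y] xy t \<open>f ` S \<subseteq> T\<close> by (intro mono_onD[OF g(2)]) auto
  also have "\<dots> \<le> (1 - t) * g (f x) + t * g (f y)"
    using convex_onD[OF g(1), of t "f x" "f y"] fxy t by simp
  finally show "(g \<circ> f) ((1 - t) *\<^sub>R x + t *\<^sub>R y) \<le> (1 - t) * (g \<circ> f) x + t * (g \<circ> f) y"
    by simp
qed (fact convex_on_imp_convex[OF f])

lemma convex_on_power2_nonneg:
  assumes "convex_on S f" "\<And>x. x \<in> S \<Longrightarrow> 0 \<le> f x"
  shows "convex_on S (\<lambda>x. (f x)\<^sup>2)"
proof -
  have "convex_on {0..} (power2 :: real \<Rightarrow> real)"
    using convex_power2 by (rule convex_on_subset) auto
  moreover have "mono_on {0..} (power2 :: real \<Rightarrow> real)"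
    by (auto intro!: mono_onI power_mono)
  ultimately show ?thesis
    using convex_on_compose_mono[OF assms(1)] assms(2) by (auto simp: o_def)
qed

lemma convex_on_infdist:
  fixes S :: "'a::real_normed_vector set"
  assumes "convex S"
  shows "convex_on UNIV (\<lambda>x. infdist x S)"
proof (cases "S = {}")
  case True
  then show ?thesis by (simp add: infdist_def convex_on_const)
next
  case False
  have near: "\<exists>p\<in>S. dist x p < infdist x S + e" if "0 < e" for x and e :: real
  proof -
    have "(INF p\<in>S. dist x p) < infdist x S + e"
      using False that by (simp add: infdist_notempty)
    then show ?thesis
      using False by (simp add: cINF_less_iff)
  qed
  show ?thesis
  proof (rule convex_onI)
    fix t :: real and x y :: 'a assume t: "0 < t" "t < 1"
    show "infdist ((1 - t) *\<^sub>R x + t *\<^sub>R y) S \<le> (1 - t) * infdist x S + t * infdist y S"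
    proof (rule field_le_epsilon)
      fix e :: real assume "0 < e"
      obtain p q where pq: "p \<in> S" "q \<in> S"
        and "dist x p < infdist x S + e" "dist y q < infdist y S + e"
        using near[OF \<open>0 < e\<close>] by blast
      have "infdist ((1 - t) *\<^sub>R x + t *\<^sub>R y) S \<le> dist ((1 - t) *\<^sub>R x + t *\<^sub>R y) ((1 - t) *\<^sub>R p + t *\<^sub>R q)"
        using pq t \<open>convex S\<close> by (intro infdist_le) (simp add: convexD)
      also have "\<dots> \<le> (1 - t) * dist x p + t * dist y q"
      proof -
        have "(1 - t) *\<^sub>R x + t *\<^sub>R y - ((1 - t) *\<^sub>R p + t *\<^sub>R q) = (1 - t) *\<^sub>R (x - p) + t *\<^sub>R (y - q)"
          by (simp add: algebra_simps)
        then show ?thesis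
          using t norm_triangle_ineq[of "(1 - t) *\<^sub>R (x - p)" "t *\<^sub>R (y - q)"]
          by (simp add: dist_norm)
      qed
      also have "\<dots> \<le> (1 - t) * (infdist x S + e) + t * (infdist y S + e)"
        using t \<open>dist x p < _\<close> \<open>dist y q < _\<close> by (intro add_mono mult_left_mono) auto
      finally show "infdist ((1 - t) *\<^sub>R x + t *\<^sub>R y) S \<le> (1 - t) * infdist x S + t * infdist y S + e"
        by (simp add: algebra_simps)
    qed
  qed simp
qed

lemma convex_on_quadratic_form:
  fixes f :: "'a::real_inner \<Rightarrow> 'a"
  assumes "linear f" "\<And>v. 0 \<le> v \<bullet> f v"
  shows "convex_on UNIV (\<lambda>x. x \<bullet> f x)"
proof (rule convex_onI)
  fix t :: real and x y :: 'a assume t: "0 < t" "t < 1"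
  have "((1 - t) *\<^sub>R x + t *\<^sub>R y) \<bullet> f ((1 - t) *\<^sub>R x + t *\<^sub>R y)
        = (1 - t) * (x \<bullet> f x) + t * (y \<bullet> f y) - t * (1 - t) * ((x - y) \<bullet> f (x - y))"
    using assms(1) by (simp add: linear_add linear_scale linear_diff inner_add inner_diff algebra_simps)
  moreover have "0 \<le> t * (1 - t) * ((x - y) \<bullet> f (x - y))"
    using t assms(2) by simp
  ultimately show "((1 - t) *\<^sub>R x + t *\<^sub>R y) \<bullet> f ((1 - t) *\<^sub>R x + t *\<^sub>R y) \<le> (1 - t) * (x \<bullet> f x) + t * (y \<bullet> f y)"
    by linarith
qed simp

lemma inner_symmetric_part_mult:
  fixes A :: "real^'n^'n"
  shows "x \<bullet> (((1/2) *\<^sub>R (A + transpose A)) *v x) = x \<bullet> (A *v x)"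
proof -
  have "x \<bullet> (transpose A *v x) = x \<bullet> (A *v x)"
    by (simp add: inner_commute flip: dot_lmul_matrix)
  then show ?thesis
    by (simp add: matrix_vector_mult_add_rdistrib inner_add_right flip: scaleR_matrix_vector_assoc)
qed

lemma inner_Cmat_mult:
  "x \<bullet> (Cmat a c *v x) = (\<Sum>i\<in>UNIV. 1/2 * a i * (x$i)\<^sup>2 + (\<Sum>j\<in>UNIV - {i}. c i j * x$j) * x$i)"
proof -
  have "x$i * (\<Sum>j\<in>UNIV. Cmat a c $i $j * x$j) = 1/2 * a i * (x$i)\<^sup>2 + (\<Sum>j\<in>UNIV - {i}. c i j * x$j) * x$i"
    for i
  proof -
    have "(\<Sum>j\<in>UNIV. Cmat a c $i $j * x$j) = a i / 2 * x$i + (\<Sum>j\<in>UNIV - {i}. c i j * x$j)"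
      by (subst sum.remove[of UNIV i]) (auto simp: Cmat_def intro!: sum.cong)
    then show ?thesis
      by (simp add: algebra_simps power2_eq_square)
  qed
  then show ?thesis
    by (simp add: inner_vec_def matrix_vector_mult_def)
qed

lemma sum_player_cost:
  "(\<Sum>i\<in>UNIV. player_cost a b c cup \<eta> i x)
     = x \<bullet> (Cmat a c *v x) + (\<Sum>i\<in>UNIV. b i * x$i) + (\<Sum>i\<in>UNIV. 1/(2*\<eta>) * (infdist (x$i) {0..cup i})\<^sup>2)"
  by (simp add: player_cost_def inner_Cmat_mult sum.distrib)

theorem lemma10:
  fixes a b cup :: "'m::finite \<Rightarrow> real" and c :: "'m \<Rightarrow> 'm \<Rightarrow> real" and \<eta> :: real
  assumes "\<forall>i. a i \<ge> 0" and "\<forall>i. cup i > 0" and "\<eta> > 0"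
    and "pos_semidef ((1/2) *\<^sub>R (Cmat a c + transpose (Cmat a c)))"
  shows "convex_on UNIV (\<lambda>x. \<Sum>i\<in>UNIV. player_cost a b c cup \<eta> i x)"
proof -
  have "convex_on UNIV (\<lambda>x. x \<bullet> (Cmat a c *v x))"
    using assms(4) unfolding pos_semidef_def inner_symmetric_part_mult
    by (intro convex_on_quadratic_form matrix_vector_mul_linear) auto
  moreover have "convex_on UNIV (\<lambda>x. \<Sum>i\<in>UNIV. b i * x$i)"
    by (intro convex_on_linear linearI) (auto simp: sum.distrib sum_distrib_left algebra_simps)
  moreover have "convex_on UNIV (\<lambda>x. \<Sum>i\<in>UNIV. 1/(2*\<eta>) * (infdist (x$i) {0..cup i})\<^sup>2)"
  proof (intro convex_on_sum_fun convex_on_cmul)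
    fix i
    have "convex_on UNIV (\<lambda>s::real. (infdist s {0..cup i})\<^sup>2)"
      by (intro convex_on_power2_nonneg convex_on_infdist) (auto simp: infdist_nonneg)
    then show "convex_on UNIV (\<lambda>x. (infdist (x$i) {0..cup i})\<^sup>2)"
      using convex_on_compose_linear[OF bounded_linear.linear[OF bounded_linear_vec_nth]]
      by (auto simp: o_def)
  qed (use assms(3) in auto)
  ultimately show ?thesis
    unfolding sum_player_cost by (intro convex_on_add)
qed

end
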